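(* Fix $\delta\in(0,1]$. If a random variable $\xi\ge0$ has a heavy-tailed distribution, then there exists a function $h:\mathbf R^+\to\mathbf R^+$ such that: (i) $h$ is subadditive, i.e. $h(x)\le h(y)+h(x-y)$ for all $0\le y\le x$; (ii) $h(x)=o(x)$ as $x\to\infty$; (iii) $\mathbf E e^{h(\xi)}\le 1+\delta$; (iv) $\mathbf E\,\xi e^{h(\xi)}=\infty$.
   Context: A distribution $F$ on $[0,\infty)$ is heavy-tailed if $\int_0^\infty e^{\gamma x}F(dx)=\infty$ for every $\gamma>0$. *)

theory Defs
  imports "HOL-Probability.Probability" "HOL-Library.Landau_Symbols"
begin

definition heavy_tailed :: "real measure \<Rightarrow> bool" where
  "heavy_tailed F \<longleftrightarrow> (\<forall>\<gamma>::real. \<gamma> > 0 \<longrightarrow> (\<integral>\<^sup>+ x. ennreal (exp (\<gamma> * x)) \<partial>F) = \<infinity>)"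

end

theory Submission
  imports Defs
begin

(* The function h is the lower envelope of lines x -> a_k + \<gamma>_k x with intercepts a_k >= 0 and
   slopes \<gamma>_k = \<delta> / 2^(k+1) decreasing to 0. Such an envelope is concave with h(0) = 0, hence
   subadditive, and h(x) = o(x). Line k is active on [s_k, s_(k+1)], and the breakpoints are chosen
   inductively, by the intermediate value theorem, so that
     E e^h(min \<xi> s_(k+1)) - E e^h(min \<xi> s_k) = \<gamma>_k;
   such an s_(k+1) exists because heavy tails make the truncated exponential moments unbounded.
   Summing, E e^h(\<xi>) = 1 + \<delta>. On the other hand, along line k the function e^h grows at rate
   at most \<gamma>_k e^h, so for k < K the increment \<gamma>_k is at most
   \<gamma>_k E[(min \<xi> s_(k+1) - min \<xi> s_k) e^h(min \<xi> s_K)]. Summing over k < K gives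
   E[min \<xi> s_K e^h(min \<xi> s_K)] >= K, whence E \<xi> e^h(\<xi>) is infinite. *)

lemma exp_diff_le:
  fixes x y :: real
  shows "exp x - exp y \<le> exp x * (x - y)"
proof -
  have "exp x * (1 + (y - x)) \<le> exp x * exp (y - x)"
    by simp
  then show ?thesis
    by (simp add: exp_diff algebra_simps)
qed

lemma abs_exp_diff_le:
  fixes x y c :: real
  assumes "x \<le> c" and "y \<le> c"
  shows "\<bar>exp x - exp y\<bar> \<le> exp c * \<bar>x - y\<bar>"
proof -
  have "exp u - exp v \<le> exp c * \<bar>u - v\<bar>" if "u \<le> c" for u v
  proof -
    have "exp u - exp v \<le> exp u * (u - v)"
      by (rule exp_diff_le)
    also have "\<dots> \<le> exp u * \<bar>u - v\<bar>"
      by (intro mult_left_mono) auto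
    also have "\<dots> \<le> exp c * \<bar>u - v\<bar>"
      using that by (intro mult_right_mono) auto
    finally show ?thesis .
  qed
  from this[of x y] this[of y x] assms show ?thesis
    by (auto simp: abs_le_iff abs_minus_commute)
qed

(* Clamping the argument at 0 keeps the envelope monotone, hence Borel, on all of the real line. *)
definition lower_envelope :: "('i \<Rightarrow> real) \<Rightarrow> ('i \<Rightarrow> real) \<Rightarrow> real \<Rightarrow> real" where
  "lower_envelope a b x = (INF i. a i + b i * max 0 x)"

context
  fixes a b :: "'i \<Rightarrow> real"
  assumes a_nonneg: "\<And>i. 0 \<le> a i" and b_nonneg: "\<And>i. 0 \<le> b i"
begin

lemma bdd_below_lines: "bdd_below (range (\<lambda>i. a i + b i * max 0 x))"
  using a_nonneg b_nonneg by (intro bdd_belowI[of _ 0]) auto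

lemma lower_envelope_le: "0 \<le> x \<Longrightarrow> lower_envelope a b x \<le> a i + b i * x"
  unfolding lower_envelope_def using cINF_lower[OF bdd_below_lines, of i x] by simp

lemma lower_envelope_nonneg: "0 \<le> lower_envelope a b x"
  unfolding lower_envelope_def using a_nonneg b_nonneg by (intro cINF_greatest) auto

lemma lower_envelope_eqI:
  assumes "0 \<le> x" and "\<And>j. a i + b i * x \<le> a j + b j * x"
  shows "lower_envelope a b x = a i + b i * x"
proof (rule antisym)
  show "a i + b i * x \<le> lower_envelope a b x"
    using assms unfolding lower_envelope_def by (auto intro!: cINF_greatest)
qed (rule lower_envelope_le[OF assms(1)])

lemma mono_lower_envelope: "mono (lower_envelope a b)"
proof
  fix x y :: real
  assume "x \<le> y"
  have "lower_envelope a b x \<le> a i + b i * max 0 y" for i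
  proof -
    have "lower_envelope a b x \<le> a i + b i * max 0 x"
      unfolding lower_envelope_def by (rule cINF_lower[OF bdd_below_lines]) simp
    also have "\<dots> \<le> a i + b i * max 0 y"
      using \<open>x \<le> y\<close> b_nonneg[of i] by (intro add_left_mono mult_left_mono) auto
    finally show ?thesis .
  qed
  then show "lower_envelope a b x \<le> lower_envelope a b y"
    unfolding lower_envelope_def[of a b y] by (intro cINF_greatest) auto
qed

lemma borel_measurable_lower_envelope: "lower_envelope a b \<in> borel_measurable borel"
  by (rule borel_measurable_mono[OF mono_lower_envelope])

lemma lower_envelope_subadditive:
  assumes "0 \<le> y" and "y \<le> x"
  shows "lower_envelope a b x \<le> lower_envelope a b y + lower_envelope a b (x - y)"
proof -
  let ?h = "lower_envelope a b"
  have "?h x \<le> (a i + b i * y) + (a j + b j * (x - y))" for i j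
  proof (cases "b j \<le> b i")
    case True
    then have "b j * y \<le> b i * y" using assms by (intro mult_right_mono) auto
    then show ?thesis using lower_envelope_le[of x j] assms a_nonneg[of i]
      by (simp add: algebra_simps)
  next
    case False
    then have "b i * (x - y) \<le> b j * (x - y)" using assms by (intro mult_right_mono) auto
    then show ?thesis using lower_envelope_le[of x i] assms a_nonneg[of j]
      by (simp add: algebra_simps)
  qed
  then have "?h x - (a j + b j * (x - y)) \<le> ?h y" for j
    using assms unfolding lower_envelope_def[of a b y]
    by (intro cINF_greatest) (auto simp: algebra_simps)
  then have "?h x - ?h y \<le> ?h (x - y)"
    using assms unfolding lower_envelope_def[of a b "x - y"]
    by (intro cINF_greatest) (auto simp: algebra_simps)
  then show ?thesis by simp
qed

lemma lower_envelope_smallo: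
  assumes "\<And>c. 0 < c \<Longrightarrow> \<exists>i. b i < c"
  shows "lower_envelope a b \<in> o[at_top](\<lambda>x. x)"
proof (rule landau_o.smallI)
  fix c :: real
  assume "0 < c"
  then obtain i where i: "b i < c / 2" using assms[of "c / 2"] by auto
  have "lower_envelope a b x \<le> c * x" if "max 1 (2 * a i / c) \<le> x" for x
  proof -
    have "a i \<le> c / 2 * x" using that \<open>0 < c\<close> by (simp add: field_simps)
    moreover have "b i * x \<le> c / 2 * x" using i that by (intro mult_right_mono) auto
    moreover have "lower_envelope a b x \<le> a i + b i * x" using that by (intro lower_envelope_le) auto
    ultimately show ?thesis by linarith
  qed
  then show "\<forall>\<^sub>F x in at_top. norm (lower_envelope a b x) \<le> c * norm x"
    unfolding eventually_at_top_linorder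
    by (metis lower_envelope_nonneg abs_of_nonneg max.boundedE real_norm_def)
qed

end

lemma nn_integral_truncation_SUP:
  fixes Z :: "'a \<Rightarrow> real" and s :: "nat \<Rightarrow> real"
  assumes [measurable]: "Z \<in> borel_measurable M"
    and "mono f" and "incseq s" and "\<And>x. \<exists>n. x \<le> s n"
  shows "(SUP n. \<integral>\<^sup>+\<omega>. ennreal (f (min (Z \<omega>) (s n))) \<partial>M) = (\<integral>\<^sup>+\<omega>. ennreal (f (Z \<omega>)) \<partial>M)"
proof -
  have [measurable]: "f \<in> borel_measurable borel"
    using borel_measurable_mono \<open>mono f\<close> .
  have "ennreal (f (Z \<omega>)) = (SUP n. ennreal (f (min (Z \<omega>) (s n))))" for \<omega>
  proof (rule antisym)
    obtain n where "Z \<omega> \<le> s n" using assms(4) by blast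
    then show "ennreal (f (Z \<omega>)) \<le> (SUP n. ennreal (f (min (Z \<omega>) (s n))))"
      by (intro SUP_upper2[of n]) auto
    show "(SUP n. ennreal (f (min (Z \<omega>) (s n)))) \<le> ennreal (f (Z \<omega>))"
      by (intro SUP_least ennreal_leI monoD[OF \<open>mono f\<close>]) simp
  qed
  then have "(\<integral>\<^sup>+\<omega>. ennreal (f (Z \<omega>)) \<partial>M)
      = (\<integral>\<^sup>+\<omega>. (SUP n. ennreal (f (min (Z \<omega>) (s n)))) \<partial>M)"
    by simp
  also have "\<dots> = (SUP n. \<integral>\<^sup>+\<omega>. ennreal (f (min (Z \<omega>) (s n))) \<partial>M)"
    using \<open>incseq s\<close>
    by (intro nn_integral_monotone_convergence_SUP)
       (auto simp: incseq_def le_fun_def intro!: ennreal_leI monoD[OF \<open>mono f\<close>] min.mono)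
  finally show ?thesis ..
qed

lemma (in prob_space) lipschitz_on_expectation:
  fixes f :: "'b::metric_space \<Rightarrow> 'a \<Rightarrow> real"
  assumes "\<And>t. t \<in> T \<Longrightarrow> integrable M (f t)"
    and "\<And>t t' \<omega>. t \<in> T \<Longrightarrow> t' \<in> T \<Longrightarrow> dist (f t \<omega>) (f t' \<omega>) \<le> C * dist t t'"
    and "0 \<le> C"
  shows "C-lipschitz_on T (\<lambda>t. expectation (f t))"
proof (rule lipschitz_onI)
  fix t t'
  assume "t \<in> T" "t' \<in> T"
  then have "dist (expectation (f t)) (expectation (f t')) = \<bar>expectation (\<lambda>\<omega>. f t \<omega> - f t' \<omega>)\<bar>"
    using assms(1) by (simp add: dist_real_def)
  also have "\<dots> \<le> expectation (\<lambda>\<omega>. \<bar>f t \<omega> - f t' \<omega>\<bar>)"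
    by (rule integral_abs_bound)
  also have "\<dots> \<le> expectation (\<lambda>\<omega>. C * dist t t')"
    using \<open>t \<in> T\<close> \<open>t' \<in> T\<close> assms(1,2)
    by (intro integral_mono) (auto simp: dist_real_def)
  also have "\<dots> = C * dist t t'"
    by (simp add: prob_space)
  finally show "dist (expectation (f t)) (expectation (f t')) \<le> C * dist t t'" .
qed fact

lemma heavy_tailed_distr_iff:
  assumes "\<xi> \<in> borel_measurable M"
  shows "heavy_tailed (distr M borel \<xi>)
    \<longleftrightarrow> (\<forall>\<gamma>>0. (\<integral>\<^sup>+\<omega>. ennreal (exp (\<gamma> * \<xi> \<omega>)) \<partial>M) = \<infinity>)"
  using assms by (simp add: heavy_tailed_def nn_integral_distr)

locale heavy_tailed_rv = prob_space +
  fixes Z :: "'a \<Rightarrow> real"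
  assumes Z_measurable[measurable]: "Z \<in> borel_measurable M"
    and Z_nonneg: "\<And>\<omega>. 0 \<le> Z \<omega>"
    and nn_integral_exp_infinite: "\<And>\<gamma>. 0 < \<gamma> \<Longrightarrow> (\<integral>\<^sup>+\<omega>. ennreal (exp (\<gamma> * Z \<omega>)) \<partial>M) = \<infinity>"
begin

lemma integrable_truncated:
  fixes f :: "real \<Rightarrow> real"
  assumes [measurable]: "f \<in> borel_measurable borel"
    and bound: "\<And>x. min 0 t \<le> x \<Longrightarrow> x \<le> t \<Longrightarrow> \<bar>f x\<bar> \<le> B"
  shows "integrable M (\<lambda>\<omega>. f (min (Z \<omega>) t))"
proof (rule integrable_const_bound[where B = B])
  show "AE \<omega> in M. norm (f (min (Z \<omega>) t)) \<le> B"
    by (auto intro!: bound min.mono Z_nonneg)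
qed measurable

definition truncated_exp_moment :: "real \<Rightarrow> real \<Rightarrow> real \<Rightarrow> real" where
  "truncated_exp_moment a b t = expectation (\<lambda>\<omega>. exp (a + b * min (Z \<omega>) t))"

lemma integrable_exp_affine_truncated:
  assumes "0 \<le> b"
  shows "integrable M (\<lambda>\<omega>. exp (a + b * min (Z \<omega>) t))"
  by (rule integrable_truncated[where B = "exp (a + b * t)"]) (use assms in \<open>auto intro: mult_left_mono\<close>)

lemma continuous_on_truncated_exp_moment:
  assumes "0 \<le> b"
  shows "continuous_on {..T} (truncated_exp_moment a b)"
proof -
  let ?C = "exp (a + b * T) * b"
  have "dist (exp (a + b * min z t)) (exp (a + b * min z t')) \<le> ?C * dist t t'"
    if "t \<le> T" "t' \<le> T" for z t t'
  proof -
    have le_top: "a + b * min z u \<le> a + b * T" if "u \<le> T" for u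
      using that assms by (intro add_left_mono mult_left_mono) auto
    have "\<bar>exp (a + b * min z t) - exp (a + b * min z t')\<bar>
        \<le> exp (a + b * T) * \<bar>(a + b * min z t) - (a + b * min z t')\<bar>"
      by (intro abs_exp_diff_le le_top that)
    also have "\<dots> = exp (a + b * T) * (b * \<bar>min z t - min z t'\<bar>)"
      using assms by (simp add: abs_mult flip: right_diff_distrib)
    also have "\<dots> \<le> exp (a + b * T) * (b * \<bar>t - t'\<bar>)"
      using assms by (intro mult_left_mono) (auto simp: min_def)
    finally show ?thesis
      by (simp add: dist_real_def)
  qed
  then have "?C-lipschitz_on {..T} (truncated_exp_moment a b)"
    unfolding truncated_exp_moment_def using assms
    by (intro lipschitz_on_expectation integrable_exp_affine_truncated) auto
  then show ?thesis
    by (rule lipschitz_on_continuous_on)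
qed

lemma truncated_exp_moment_unbounded:
  assumes "0 < b"
  shows "\<exists>t\<ge>s. c \<le> truncated_exp_moment a b t"
proof -
  have "mono (\<lambda>x. exp (a + b * x))"
    using assms by (intro monoI) auto
  moreover have "incseq (\<lambda>n. s + real n)"
    by (intro incseq_SucI) auto
  moreover have "\<exists>n. x \<le> s + real n" for x
    using real_arch_simple[of "x - s"] by (auto simp: algebra_simps)
  ultimately have "(SUP n. \<integral>\<^sup>+\<omega>. ennreal (exp (a + b * min (Z \<omega>) (s + real n))) \<partial>M)
      = (\<integral>\<^sup>+\<omega>. ennreal (exp (a + b * Z \<omega>)) \<partial>M)"
    by (intro nn_integral_truncation_SUP) auto
  also have "\<dots> = ennreal (exp a) * (\<integral>\<^sup>+\<omega>. ennreal (exp (b * Z \<omega>)) \<partial>M)"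
    by (simp add: exp_add ennreal_mult nn_integral_cmult)
  also have "\<dots> = \<infinity>"
    using nn_integral_exp_infinite[OF assms] by (simp add: ennreal_mult_top)
  finally have "ennreal (max 0 c) < (SUP n. \<integral>\<^sup>+\<omega>. ennreal (exp (a + b * min (Z \<omega>) (s + real n))) \<partial>M)"
    by (simp only: ennreal_less_top infinity_ennreal_def)
  then obtain n
    where "ennreal (max 0 c) < (\<integral>\<^sup>+\<omega>. ennreal (exp (a + b * min (Z \<omega>) (s + real n))) \<partial>M)"
    unfolding less_SUP_iff by blast
  also have "\<dots> = ennreal (truncated_exp_moment a b (s + real n))"
    unfolding truncated_exp_moment_def using assms
    by (intro nn_integral_eq_integral integrable_exp_affine_truncated) auto
  finally have "max 0 c < truncated_exp_moment a b (s + real n)"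
    by (rule ennreal_less_iff[THEN iffD1, OF max.cobounded1])
  then show ?thesis
    by (intro exI[of _ "s + real n"]) auto
qed

lemma truncated_exp_moment_increment:
  assumes "0 < b" and "0 \<le> c"
  shows "\<exists>t\<ge>s. truncated_exp_moment a b t = truncated_exp_moment a b s + c"
proof -
  obtain T where "s \<le> T" and "truncated_exp_moment a b s + c \<le> truncated_exp_moment a b T"
    using truncated_exp_moment_unbounded[OF assms(1)] by blast
  moreover have "continuous_on {s..T} (truncated_exp_moment a b)"
    by (rule continuous_on_subset[OF continuous_on_truncated_exp_moment]) (use assms in auto)
  ultimately have "\<exists>t\<ge>s. t \<le> T \<and> truncated_exp_moment a b t = truncated_exp_moment a b s + c"
    using assms(2) by (intro IVT') auto
  then show ?thesis
    by blast
qed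

end

locale heavy_tailed_envelope = heavy_tailed_rv +
  fixes \<gamma> :: "nat \<Rightarrow> real"
  assumes \<gamma>_pos: "\<And>k. 0 < \<gamma> k" and decseq_\<gamma>: "decseq \<gamma>" and summable_\<gamma>: "summable \<gamma>"
begin

lemma \<gamma>_nonneg: "0 \<le> \<gamma> k"
  using \<gamma>_pos less_imp_le by blast

(* Line k is x -> intercept k + \<gamma> k * x. The next breakpoint is where the truncated exponential
   moment along line k has grown by exactly \<gamma> k; the next intercept makes lines k and k + 1 meet
   there. *)
primrec breakpoint_intercept :: "nat \<Rightarrow> real \<times> real" where
  "breakpoint_intercept 0 = (0, 0)"
| "breakpoint_intercept (Suc k) =
    (let (s, a) = breakpoint_intercept k;
         t = (SOME t. s \<le> t \<and> truncated_exp_moment a (\<gamma> k) t = truncated_exp_moment a (\<gamma> k) s + \<gamma> k)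
     in (t, a + (\<gamma> k - \<gamma> (Suc k)) * t))"

definition breakpoint :: "nat \<Rightarrow> real" where
  "breakpoint k = fst (breakpoint_intercept k)"

definition intercept :: "nat \<Rightarrow> real" where
  "intercept k = snd (breakpoint_intercept k)"

lemma breakpoint_0: "breakpoint 0 = 0" and intercept_0: "intercept 0 = 0"
  by (simp_all add: breakpoint_def intercept_def)

lemma breakpoint_Suc:
  "breakpoint k \<le> breakpoint (Suc k)"
  "truncated_exp_moment (intercept k) (\<gamma> k) (breakpoint (Suc k))
     = truncated_exp_moment (intercept k) (\<gamma> k) (breakpoint k) + \<gamma> k"
  and intercept_Suc: "intercept (Suc k) = intercept k + (\<gamma> k - \<gamma> (Suc k)) * breakpoint (Suc k)"
proof -
  let ?P = "\<lambda>t. breakpoint k \<le> t \<and> truncated_exp_moment (intercept k) (\<gamma> k) t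
                = truncated_exp_moment (intercept k) (\<gamma> k) (breakpoint k) + \<gamma> k"
  have "?P (SOME t. ?P t)"
    using truncated_exp_moment_increment[OF \<gamma>_pos \<gamma>_nonneg] by (rule someI_ex)
  moreover have "breakpoint (Suc k) = (SOME t. ?P t)"
    and "intercept (Suc k) = intercept k + (\<gamma> k - \<gamma> (Suc k)) * (SOME t. ?P t)"
    by (simp_all add: breakpoint_def intercept_def split_beta Let_def)
  ultimately show
    "breakpoint k \<le> breakpoint (Suc k)"
    "truncated_exp_moment (intercept k) (\<gamma> k) (breakpoint (Suc k))
       = truncated_exp_moment (intercept k) (\<gamma> k) (breakpoint k) + \<gamma> k"
    "intercept (Suc k) = intercept k + (\<gamma> k - \<gamma> (Suc k)) * breakpoint (Suc k)"
    by simp_all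
qed

lemma incseq_breakpoint: "incseq breakpoint"
  by (rule incseq_SucI) (rule breakpoint_Suc(1))

lemma breakpoint_nonneg: "0 \<le> breakpoint k"
  using incseq_breakpoint breakpoint_0 by (metis incseq_def le0)

lemma intercept_nonneg: "0 \<le> intercept k"
proof (induction k)
  case (Suc k)
  have "0 \<le> (\<gamma> k - \<gamma> (Suc k)) * breakpoint (Suc k)"
    using decseq_\<gamma> breakpoint_nonneg by (simp add: decseq_Suc_iff)
  then show ?case
    using Suc intercept_Suc[of k] by simp
qed (simp add: intercept_0)

lemma line_Suc_diff:
  "(intercept (Suc k) + \<gamma> (Suc k) * x) - (intercept k + \<gamma> k * x)
     = (\<gamma> k - \<gamma> (Suc k)) * (breakpoint (Suc k) - x)"
  by (simp add: intercept_Suc algebra_simps)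

lemma line_minimal:
  assumes "breakpoint k \<le> x" and "x \<le> breakpoint (Suc k)"
  shows "intercept k + \<gamma> k * x \<le> intercept j + \<gamma> j * x"
proof (cases "k \<le> j")
  case True
  then show ?thesis
  proof (induction j rule: dec_induct)
    case (step j)
    have "breakpoint (Suc k) \<le> breakpoint (Suc j)"
      using incseq_breakpoint step.hyps(1) by (simp add: incseq_def)
    then have "0 \<le> (\<gamma> j - \<gamma> (Suc j)) * (breakpoint (Suc j) - x)"
      using assms decseq_\<gamma> by (intro mult_nonneg_nonneg) (auto simp: decseq_Suc_iff)
    then show ?case
      using line_Suc_diff[of j x] step.IH by linarith
  qed simp
next
  case False
  then have "j \<le> k" by simp
  then show ?thesis
  proof (induction j rule: inc_induct)
    case (step j)
    have "breakpoint (Suc j) \<le> breakpoint k"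
      using incseq_breakpoint step.hyps(2) by (simp add: incseq_def)
    then have "(\<gamma> j - \<gamma> (Suc j)) * (breakpoint (Suc j) - x) \<le> 0"
      using assms decseq_\<gamma> by (intro mult_nonneg_nonpos) (auto simp: decseq_Suc_iff)
    then show ?case
      using line_Suc_diff[of j x] step.IH by linarith
  qed simp
qed

definition h :: "real \<Rightarrow> real" where
  "h = lower_envelope intercept \<gamma>"

lemma mono_h: "mono h"
  unfolding h_def by (intro mono_lower_envelope intercept_nonneg \<gamma>_nonneg)

lemma h_measurable[measurable]: "h \<in> borel_measurable borel"
  using mono_h by (rule borel_measurable_mono)

lemma h_nonneg: "0 \<le> h x"
  unfolding h_def by (intro lower_envelope_nonneg intercept_nonneg \<gamma>_nonneg)

lemma h_subadditive: "0 \<le> y \<Longrightarrow> y \<le> x \<Longrightarrow> h x \<le> h y + h (x - y)"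
  unfolding h_def by (intro lower_envelope_subadditive intercept_nonneg \<gamma>_nonneg)

lemma h_eq_line:
  assumes "breakpoint k \<le> x" and "x \<le> breakpoint (Suc k)"
  shows "h x = intercept k + \<gamma> k * x"
  unfolding h_def using assms breakpoint_nonneg[of k]
  by (intro lower_envelope_eqI line_minimal intercept_nonneg \<gamma>_nonneg) auto

lemma h_smallo: "h \<in> o[at_top](\<lambda>x. x)"
proof -
  have "\<exists>k. \<gamma> k < c" if "0 < c" for c
    using order_tendstoD(2)[OF summable_LIMSEQ_zero[OF summable_\<gamma>] that]
    by (auto simp: eventually_sequentially)
  then show ?thesis
    unfolding h_def by (intro lower_envelope_smallo intercept_nonneg \<gamma>_nonneg)
qed

definition trunc :: "nat \<Rightarrow> 'a \<Rightarrow> real" where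
  "trunc K \<omega> = min (Z \<omega>) (breakpoint K)"

lemma trunc_measurable[measurable]: "trunc K \<in> borel_measurable M"
  unfolding trunc_def by measurable

lemma trunc_0: "trunc 0 \<omega> = 0"
  using Z_nonneg[of \<omega>] by (simp add: trunc_def breakpoint_0)

lemma trunc_nonneg: "0 \<le> trunc K \<omega>"
  using Z_nonneg[of \<omega>] breakpoint_nonneg[of K] by (simp add: trunc_def)

lemma trunc_le_Z: "trunc K \<omega> \<le> Z \<omega>"
  by (simp add: trunc_def)

lemma trunc_mono: "K \<le> L \<Longrightarrow> trunc K \<omega> \<le> trunc L \<omega>"
  unfolding trunc_def using incseq_breakpoint by (intro min.mono order_refl) (auto simp: incseq_def)

lemma trunc_Suc_cases:
  obtains "trunc (Suc k) \<omega> = trunc k \<omega>"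
  | "trunc k \<omega> = breakpoint k" and "breakpoint k \<le> trunc (Suc k) \<omega>"
    and "trunc (Suc k) \<omega> \<le> breakpoint (Suc k)"
  using breakpoint_Suc(1)[of k] unfolding trunc_def by (cases "Z \<omega> \<le> breakpoint k") auto

lemma h_trunc_Suc: "h (trunc (Suc k) \<omega>) = h (trunc k \<omega>) + \<gamma> k * (trunc (Suc k) \<omega> - trunc k \<omega>)"
proof (cases rule: trunc_Suc_cases[of k \<omega>])
  case 2
  then show ?thesis
    using breakpoint_Suc(1)[of k] h_eq_line[of k "breakpoint k"] h_eq_line[of k "trunc (Suc k) \<omega>"]
    by (simp add: algebra_simps)
qed simp

lemma exp_h_trunc_Suc_diff:
  "exp (h (trunc (Suc k) \<omega>)) - exp (h (trunc k \<omega>))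
     = exp (intercept k + \<gamma> k * trunc (Suc k) \<omega>) - exp (intercept k + \<gamma> k * trunc k \<omega>)"
proof (cases rule: trunc_Suc_cases[of k \<omega>])
  case 2
  then show ?thesis
    using breakpoint_Suc(1)[of k] by (simp add: h_eq_line)
qed simp

lemma integrable_exp_h_trunc: "integrable M (\<lambda>\<omega>. exp (h (trunc K \<omega>)))"
  unfolding trunc_def
  by (rule integrable_truncated[where B = "exp (h (breakpoint K))"]) (auto intro: monoD[OF mono_h])

lemma integrable_trunc_exp_h: "integrable M (\<lambda>\<omega>. trunc K \<omega> * exp (h (trunc K \<omega>)))"
  unfolding trunc_def
  using breakpoint_nonneg[of K]
  by (intro integrable_truncated[where B = "breakpoint K * exp (h (breakpoint K))"])
     (auto intro!: mult_mono monoD[OF mono_h])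

lemma expectation_exp_h_trunc: "expectation (\<lambda>\<omega>. exp (h (trunc K \<omega>))) = 1 + (\<Sum>k<K. \<gamma> k)"
proof (induction K)
  case 0
  have "h 0 = 0"
    using h_eq_line[of 0 0] breakpoint_Suc(1)[of 0] by (simp add: breakpoint_0 intercept_0)
  then show ?case
    by (simp add: trunc_0 prob_space)
next
  case (Suc K)
  have "expectation (\<lambda>\<omega>. exp (h (trunc (Suc K) \<omega>))) - expectation (\<lambda>\<omega>. exp (h (trunc K \<omega>)))
      = expectation (\<lambda>\<omega>. exp (h (trunc (Suc K) \<omega>)) - exp (h (trunc K \<omega>)))"
    by (intro Bochner_Integration.integral_diff[symmetric] integrable_exp_h_trunc)
  also have "\<dots> = expectation (\<lambda>\<omega>. exp (intercept K + \<gamma> K * trunc (Suc K) \<omega>)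
                                - exp (intercept K + \<gamma> K * trunc K \<omega>))"
    by (simp only: exp_h_trunc_Suc_diff)
  also have "\<dots> = truncated_exp_moment (intercept K) (\<gamma> K) (breakpoint (Suc K))
                 - truncated_exp_moment (intercept K) (\<gamma> K) (breakpoint K)"
    unfolding truncated_exp_moment_def trunc_def
    by (intro Bochner_Integration.integral_diff integrable_exp_affine_truncated \<gamma>_nonneg)
  also have "\<dots> = \<gamma> K"
    using breakpoint_Suc(2)[of K] by simp
  finally show ?case
    using Suc by simp
qed

lemma expectation_trunc_exp_h_ge: "real K \<le> expectation (\<lambda>\<omega>. trunc K \<omega> * exp (h (trunc K \<omega>)))"
proof -
  define X where "X k \<omega> = exp (h (trunc k \<omega>))" for k \<omega>
  have increment: "(X (Suc k) \<omega> - X k \<omega>) / \<gamma> k \<le> (trunc (Suc k) \<omega> - trunc k \<omega>) * X K \<omega>"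
    if "k < K" for k \<omega>
  proof -
    have "X (Suc k) \<omega> - X k \<omega> \<le> X (Suc k) \<omega> * (h (trunc (Suc k) \<omega>) - h (trunc k \<omega>))"
      unfolding X_def by (rule exp_diff_le)
    also have "\<dots> = \<gamma> k * ((trunc (Suc k) \<omega> - trunc k \<omega>) * X (Suc k) \<omega>)"
      by (simp add: h_trunc_Suc)
    also have "\<dots> \<le> \<gamma> k * ((trunc (Suc k) \<omega> - trunc k \<omega>) * X K \<omega>)"
      using that \<gamma>_nonneg[of k] trunc_mono[of k "Suc k" \<omega>]
      by (intro mult_left_mono) (auto simp: X_def intro!: monoD[OF mono_h] trunc_mono)
    finally show ?thesis
      using \<gamma>_pos[of k] by (simp add: pos_divide_le_eq mult.commute)
  qed
  have "(\<Sum>k<K. (X (Suc k) \<omega> - X k \<omega>) / \<gamma> k) \<le> trunc K \<omega> * X K \<omega>" for \<omega>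
  proof -
    have "(\<Sum>k<K. (X (Suc k) \<omega> - X k \<omega>) / \<gamma> k) \<le> (\<Sum>k<K. (trunc (Suc k) \<omega> - trunc k \<omega>) * X K \<omega>)"
      by (intro sum_mono increment) simp
    also have "\<dots> = trunc K \<omega> * X K \<omega>"
      using sum_lessThan_telescope[of "\<lambda>k. trunc k \<omega>" K]
      by (simp add: sum_distrib_right[symmetric] trunc_0)
    finally show ?thesis .
  qed
  moreover have integrable_X: "integrable M (X k)" for k
    unfolding X_def by (rule integrable_exp_h_trunc)
  ultimately have "expectation (\<lambda>\<omega>. \<Sum>k<K. (X (Suc k) \<omega> - X k \<omega>) / \<gamma> k)
      \<le> expectation (\<lambda>\<omega>. trunc K \<omega> * X K \<omega>)"
    using integrable_trunc_exp_h[of K] unfolding X_def by (intro integral_mono) auto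
  also have "expectation (\<lambda>\<omega>. \<Sum>k<K. (X (Suc k) \<omega> - X k \<omega>) / \<gamma> k)
      = (\<Sum>k<K. (expectation (X (Suc k)) - expectation (X k)) / \<gamma> k)"
    using integrable_X by (simp add: Bochner_Integration.integral_sum)
  also have "\<dots> = real K"
    using \<gamma>_pos[THEN less_imp_neq] by (simp add: X_def[abs_def] expectation_exp_h_trunc)
  finally show ?thesis
    by (simp add: X_def)
qed

lemma breakpoint_unbounded: "\<exists>K. x \<le> breakpoint K"
proof (rule ccontr)
  assume "\<nexists>K. x \<le> breakpoint K"
  then have below: "breakpoint K \<le> x" for K
    by (meson linorder_le_cases)
  have "real K \<le> x * exp (h x)" for K
  proof -
    have "real K \<le> expectation (\<lambda>\<omega>. trunc K \<omega> * exp (h (trunc K \<omega>)))"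
      by (rule expectation_trunc_exp_h_ge)
    also have "\<dots> \<le> expectation (\<lambda>\<omega>. x * exp (h x))"
      using below[of K] trunc_nonneg[of K] breakpoint_nonneg[of K]
      by (intro integral_mono integrable_trunc_exp_h)
         (auto intro!: mult_mono monoD[OF mono_h] simp: trunc_def)
    finally show ?thesis
      by (simp add: prob_space)
  qed
  then show False
    using reals_Archimedean2[of "x * exp (h x)"] by (meson linorder_not_le)
qed

lemma nn_integral_exp_h: "(\<integral>\<^sup>+\<omega>. ennreal (exp (h (Z \<omega>))) \<partial>M) = ennreal (1 + suminf \<gamma>)"
proof -
  have "(\<integral>\<^sup>+\<omega>. ennreal (exp (h (Z \<omega>))) \<partial>M) = (SUP K. \<integral>\<^sup>+\<omega>. ennreal (exp (h (trunc K \<omega>))) \<partial>M)"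
    unfolding trunc_def using mono_h incseq_breakpoint breakpoint_unbounded
    by (intro nn_integral_truncation_SUP[symmetric]) (auto intro: monoI dest: monoD)
  also have "\<dots> = (SUP K. ennreal (1 + (\<Sum>k<K. \<gamma> k)))"
    by (simp add: nn_integral_eq_integral integrable_exp_h_trunc expectation_exp_h_trunc)
  also have "\<dots> = ennreal (1 + suminf \<gamma>)"
  proof (rule LIMSEQ_unique[OF LIMSEQ_SUP])
    show "incseq (\<lambda>K. ennreal (1 + (\<Sum>k<K. \<gamma> k)))"
      using \<gamma>_nonneg by (intro incseq_SucI ennreal_leI) auto
    show "(\<lambda>K. ennreal (1 + (\<Sum>k<K. \<gamma> k))) \<longlonglongrightarrow> ennreal (1 + suminf \<gamma>)"
      by (intro tendsto_ennrealI tendsto_add tendsto_const summable_LIMSEQ summable_\<gamma>)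
  qed
  finally show ?thesis .
qed

lemma nn_integral_Z_exp_h: "(\<integral>\<^sup>+\<omega>. ennreal (Z \<omega> * exp (h (Z \<omega>))) \<partial>M) = \<infinity>"
proof -
  have "of_nat K \<le> (\<integral>\<^sup>+\<omega>. ennreal (Z \<omega> * exp (h (Z \<omega>))) \<partial>M)" for K
  proof -
    have "(of_nat K :: ennreal) \<le> ennreal (expectation (\<lambda>\<omega>. trunc K \<omega> * exp (h (trunc K \<omega>))))"
      using expectation_trunc_exp_h_ge[of K] by (simp add: ennreal_of_nat_eq_real_of_nat)
    also have "\<dots> = (\<integral>\<^sup>+\<omega>. ennreal (trunc K \<omega> * exp (h (trunc K \<omega>))) \<partial>M)"
      by (intro nn_integral_eq_integral[symmetric] integrable_trunc_exp_h AE_I2) (simp add: trunc_nonneg)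
    also have "\<dots> \<le> (\<integral>\<^sup>+\<omega>. ennreal (Z \<omega> * exp (h (Z \<omega>))) \<partial>M)"
      using trunc_nonneg trunc_le_Z Z_nonneg
      by (intro nn_integral_mono ennreal_leI mult_mono) (auto intro: monoD[OF mono_h])
    finally show ?thesis .
  qed
  then have "(SUP K. of_nat K :: ennreal) \<le> (\<integral>\<^sup>+\<omega>. ennreal (Z \<omega> * exp (h (Z \<omega>))) \<partial>M)"
    by (rule SUP_least)
  then show ?thesis
    by (simp add: ennreal_SUP_of_nat_eq_top top_unique)
qed

end

lemma heavy_tailed_rv_max_0:
  assumes "prob_space M" and "\<xi> \<in> borel_measurable M" and "AE \<omega> in M. 0 \<le> \<xi> \<omega>"
    and "heavy_tailed (distr M borel \<xi>)"
  shows "heavy_tailed_rv M (\<lambda>\<omega>. max 0 (\<xi> \<omega>))"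
proof (intro heavy_tailed_rv.intro heavy_tailed_rv_axioms.intro)
  show "(\<integral>\<^sup>+\<omega>. ennreal (exp (c * max 0 (\<xi> \<omega>))) \<partial>M) = \<infinity>" if "0 < c" for c
  proof -
    have "(\<integral>\<^sup>+\<omega>. ennreal (exp (c * max 0 (\<xi> \<omega>))) \<partial>M) = (\<integral>\<^sup>+\<omega>. ennreal (exp (c * \<xi> \<omega>)) \<partial>M)"
      by (rule nn_integral_cong_AE) (use assms(3) in eventually_elim, simp)
    also have "\<dots> = \<infinity>"
      using assms(4) that unfolding heavy_tailed_distr_iff[OF assms(2)] by simp
    finally show ?thesis .
  qed
qed (use assms(1,2) in simp_all)

lemma sums_half_powers: "(\<lambda>k. \<delta> / 2 ^ Suc k :: real) sums \<delta>"
  using sums_mult[OF power_half_series, of \<delta>] by (simp add: power_one_over)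

theorem lemma1:
  fixes M :: "'a measure" and \<xi> :: "'a \<Rightarrow> real" and \<delta> :: real
  assumes "prob_space M"
    and "\<delta> > 0" and "\<delta> \<le> 1"
    and "\<xi> \<in> borel_measurable M"
    and "AE \<omega> in M. \<xi> \<omega> \<ge> 0"
    and "heavy_tailed (distr M borel \<xi>)"
  shows "\<exists>h :: real \<Rightarrow> real.
           h \<in> borel_measurable borel
         \<and> (\<forall>x\<ge>0. h x \<ge> 0)
         \<and> (\<forall>x y. 0 \<le> y \<and> y \<le> x \<longrightarrow> h x \<le> h y + h (x - y))
         \<and> h \<in> o[at_top](\<lambda>x. x)
         \<and> (\<integral>\<^sup>+ \<omega>. ennreal (exp (h (\<xi> \<omega>))) \<partial>M) \<le> ennreal (1 + \<delta>)
         \<and> (\<integral>\<^sup>+ \<omega>. ennreal (\<xi> \<omega> * exp (h (\<xi> \<omega>))) \<partial>M) = \<infinity>"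
proof -
  define Z where "Z \<omega> = max 0 (\<xi> \<omega>)" for \<omega>
  define \<gamma> :: "nat \<Rightarrow> real" where "\<gamma> k = \<delta> / 2 ^ Suc k" for k
  have \<gamma>_sums: "\<gamma> sums \<delta>"
    unfolding \<gamma>_def by (rule sums_half_powers)
  interpret heavy_tailed_rv M Z
    unfolding Z_def using assms(1,4,5,6) by (rule heavy_tailed_rv_max_0)
  interpret heavy_tailed_envelope M Z \<gamma>
    by unfold_locales
      (use assms(2) \<gamma>_sums in \<open>auto simp: \<gamma>_def divide_left_mono intro: decseq_SucI sums_summable\<close>)
  have \<xi>_eq_Z: "AE \<omega> in M. \<xi> \<omega> = Z \<omega>"
    using assms(5) by eventually_elim (simp add: Z_def)
  have "(\<integral>\<^sup>+\<omega>. ennreal (exp (h (\<xi> \<omega>))) \<partial>M) = (\<integral>\<^sup>+\<omega>. ennreal (exp (h (Z \<omega>))) \<partial>M)"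
    by (rule nn_integral_cong_AE) (use \<xi>_eq_Z in eventually_elim, simp)
  also have "\<dots> = ennreal (1 + \<delta>)"
    using nn_integral_exp_h \<gamma>_sums by (simp add: sums_iff)
  finally have moment: "(\<integral>\<^sup>+\<omega>. ennreal (exp (h (\<xi> \<omega>))) \<partial>M) \<le> ennreal (1 + \<delta>)"
    by simp
  have "(\<integral>\<^sup>+\<omega>. ennreal (\<xi> \<omega> * exp (h (\<xi> \<omega>))) \<partial>M) = (\<integral>\<^sup>+\<omega>. ennreal (Z \<omega> * exp (h (Z \<omega>))) \<partial>M)"
    by (rule nn_integral_cong_AE) (use \<xi>_eq_Z in eventually_elim, simp)
  then have weighted_moment: "(\<integral>\<^sup>+\<omega>. ennreal (\<xi> \<omega> * exp (h (\<xi> \<omega>))) \<partial>M) = \<infinity>"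
    using nn_integral_Z_exp_h by simp
  show ?thesis
    using h_measurable h_nonneg h_subadditive h_smallo moment weighted_moment by blast
qed

end
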